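(* Let $Y$ and $X$ be real-valued square integrable random variables on a common probability space, and let $\mathcal{H}_0=\{\delta(X)\in L^2:\ \delta:\mathbb{R}\to\mathbb{R}\text{ measurable},\ E[\delta(X)]=0\}$. Then $$\iota_X(Y)=\sup_{\delta(X)\in\mathcal{H}_0}\frac{E[Y\delta(X)]}{\operatorname{SD}[\delta(X)]}=\sup_{\delta(X)\in\mathcal{H}_0,\ \delta(X)\ge -1}\frac{E[Y\delta(X)]}{\operatorname{SD}[\delta(X)]},$$ where both suprema range over those $\delta(X)$ with $\operatorname{SD}[\delta(X)]>0$.
   Context: The mean impact of $X$ on $Y$ is $\iota_X(Y)=\sup\{E[Y\delta(X)]:\ \delta\text{ measurable},\ \delta(X)\in L^2,\ E[\delta(X)]=0,\ E[\delta^2(X)]=1\}$. $\operatorname{SD}$ denotes standard deviation. *)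

theory Defs
  imports "HOL-Probability.Probability"
begin

definition SD :: "'a measure \<Rightarrow> ('a \<Rightarrow> real) \<Rightarrow> real" where
  "SD M f = sqrt (integral\<^sup>L M (\<lambda>\<omega>. (f \<omega> - integral\<^sup>L M f)\<^sup>2))"

definition H0 :: "'a measure \<Rightarrow> ('a \<Rightarrow> real) \<Rightarrow> (real \<Rightarrow> real) set" where
  "H0 M X = {\<delta>. \<delta> \<in> borel_measurable borel
                 \<and> integrable M (\<lambda>\<omega>. (\<delta> (X \<omega>))\<^sup>2)
                 \<and> integral\<^sup>L M (\<lambda>\<omega>. \<delta> (X \<omega>)) = 0}"

definition mean_impact :: "'a measure \<Rightarrow> ('a \<Rightarrow> real) \<Rightarrow> ('a \<Rightarrow> real) \<Rightarrow> ereal" where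
  "mean_impact M X Y =
     (SUP \<delta> \<in> {\<delta> \<in> H0 M X. integral\<^sup>L M (\<lambda>\<omega>. (\<delta> (X \<omega>))\<^sup>2) = 1}.
        ereal (integral\<^sup>L M (\<lambda>\<omega>. Y \<omega> * \<delta> (X \<omega>))))"

end

theory Submission
  imports Defs
begin

text \<open>Both suprema are invariant under positive rescaling of \<open>\<delta>\<close>, which turns the first one
  into the mean impact. For the second, truncate \<open>\<delta>\<close> from below at \<open>-n\<close> and recentre: the
  result lies in \<open>H\<^sub>0\<close>, is bounded below, and hence after rescaling satisfies \<open>\<delta>(X) \<ge> -1\<close>;
  by dominated convergence its first and second moments and its covariance with \<open>Y\<close> converge
  to those of \<open>\<delta>(X)\<close>, so the ratios converge as well.\<close>

definition impact_ratio :: "'a measure \<Rightarrow> ('a \<Rightarrow> real) \<Rightarrow> ('a \<Rightarrow> real) \<Rightarrow> (real \<Rightarrow> real) \<Rightarrow> real"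
  where "impact_ratio M X Y \<delta> =
           integral\<^sup>L M (\<lambda>\<omega>. Y \<omega> * \<delta> (X \<omega>)) / SD M (\<lambda>\<omega>. \<delta> (X \<omega>))"

lemma integrable_mult_if_square_integrable:
  fixes f g :: "'a \<Rightarrow> real"
  assumes "f \<in> borel_measurable M" "g \<in> borel_measurable M"
    and "integrable M (\<lambda>x. (f x)\<^sup>2)" "integrable M (\<lambda>x. (g x)\<^sup>2)"
  shows "integrable M (\<lambda>x. f x * g x)"
proof (rule Bochner_Integration.integrable_bound[where f = "\<lambda>x. (f x)\<^sup>2 + (g x)\<^sup>2"])
  show "integrable M (\<lambda>x. (f x)\<^sup>2 + (g x)\<^sup>2)" using assms by simp
  show "(\<lambda>x. f x * g x) \<in> borel_measurable M" using assms by measurable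
  have "\<bar>f x * g x\<bar> \<le> (f x)\<^sup>2 + (g x)\<^sup>2" for x
  proof -
    have "\<bar>f x * g x\<bar> \<le> 2 * \<bar>f x\<bar> * \<bar>g x\<bar>" by (simp add: abs_mult)
    also have "\<dots> \<le> \<bar>f x\<bar>\<^sup>2 + \<bar>g x\<bar>\<^sup>2" by (rule sum_squares_bound)
    finally show ?thesis by simp
  qed
  then show "AE x in M. norm (f x * g x) \<le> norm ((f x)\<^sup>2 + (g x)\<^sup>2)" by simp
qed

lemma SD_H0_eq:
  assumes "\<delta> \<in> H0 M X"
  shows "SD M (\<lambda>\<omega>. \<delta> (X \<omega>)) = sqrt (integral\<^sup>L M (\<lambda>\<omega>. (\<delta> (X \<omega>))\<^sup>2))"
  using assms unfolding SD_def H0_def by simp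

lemma H0_cmult:
  assumes "\<delta> \<in> H0 M X"
  shows "(\<lambda>x. c * \<delta> x) \<in> H0 M X"
proof -
  have "integrable M (\<lambda>\<omega>. c\<^sup>2 * (\<delta> (X \<omega>))\<^sup>2)" using assms unfolding H0_def by auto
  then show ?thesis using assms unfolding H0_def by (auto simp: power_mult_distrib)
qed

lemma SD_H0_cmult:
  assumes "\<delta> \<in> H0 M X" "c \<ge> 0"
  shows "SD M (\<lambda>\<omega>. c * \<delta> (X \<omega>)) = c * SD M (\<lambda>\<omega>. \<delta> (X \<omega>))"
proof -
  have "SD M (\<lambda>\<omega>. c * \<delta> (X \<omega>)) = sqrt (integral\<^sup>L M (\<lambda>\<omega>. (c * \<delta> (X \<omega>))\<^sup>2))"
    using SD_H0_eq[OF H0_cmult[OF assms(1)]] by simp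
  also have "\<dots> = sqrt (c\<^sup>2 * integral\<^sup>L M (\<lambda>\<omega>. (\<delta> (X \<omega>))\<^sup>2))"
    by (simp add: power_mult_distrib)
  also have "\<dots> = c * SD M (\<lambda>\<omega>. \<delta> (X \<omega>))"
    using assms by (simp add: SD_H0_eq real_sqrt_mult)
  finally show ?thesis .
qed

lemma impact_ratio_cmult:
  assumes "\<delta> \<in> H0 M X" "c > 0"
  shows "impact_ratio M X Y (\<lambda>x. c * \<delta> x) = impact_ratio M X Y \<delta>"
proof -
  have "integral\<^sup>L M (\<lambda>\<omega>. Y \<omega> * (c * \<delta> (X \<omega>))) = c * integral\<^sup>L M (\<lambda>\<omega>. Y \<omega> * \<delta> (X \<omega>))"
    by (simp add: mult.left_commute)
  then show ?thesis
    using SD_H0_cmult[OF assms(1), of c] assms(2) unfolding impact_ratio_def by simp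
qed

lemma mean_impact_eq_SUP_impact_ratio:
  "mean_impact M X Y =
     (SUP \<delta> \<in> {\<delta> \<in> H0 M X. SD M (\<lambda>\<omega>. \<delta> (X \<omega>)) > 0}. ereal (impact_ratio M X Y \<delta>))"
  unfolding mean_impact_def
proof (intro antisym SUP_mono)
  fix \<delta> assume "\<delta> \<in> {\<delta> \<in> H0 M X. integral\<^sup>L M (\<lambda>\<omega>. (\<delta> (X \<omega>))\<^sup>2) = 1}"
  then have \<delta>: "\<delta> \<in> H0 M X" "integral\<^sup>L M (\<lambda>\<omega>. (\<delta> (X \<omega>))\<^sup>2) = 1" by auto
  then have "SD M (\<lambda>\<omega>. \<delta> (X \<omega>)) = 1" by (simp add: SD_H0_eq)
  then show "\<exists>\<delta>'\<in>{\<delta> \<in> H0 M X. SD M (\<lambda>\<omega>. \<delta> (X \<omega>)) > 0}.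
      ereal (integral\<^sup>L M (\<lambda>\<omega>. Y \<omega> * \<delta> (X \<omega>))) \<le> ereal (impact_ratio M X Y \<delta>')"
    using \<delta>(1) by (intro bexI[of _ \<delta>]) (auto simp: impact_ratio_def)
next
  fix \<delta> assume "\<delta> \<in> {\<delta> \<in> H0 M X. SD M (\<lambda>\<omega>. \<delta> (X \<omega>)) > 0}"
  then have \<delta>: "\<delta> \<in> H0 M X" and s: "SD M (\<lambda>\<omega>. \<delta> (X \<omega>)) > 0" by auto
  define c where "c = 1 / SD M (\<lambda>\<omega>. \<delta> (X \<omega>))"
  have c: "c > 0" using s by (simp add: c_def)
  have c\<delta>: "(\<lambda>x. c * \<delta> x) \<in> H0 M X" using H0_cmult[OF \<delta>] .
  have "SD M (\<lambda>\<omega>. c * \<delta> (X \<omega>)) = 1"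
    using SD_H0_cmult[OF \<delta>, of c] c s by (simp add: c_def)
  then have "integral\<^sup>L M (\<lambda>\<omega>. (c * \<delta> (X \<omega>))\<^sup>2) = 1"
    using SD_H0_eq[OF c\<delta>] by simp
  moreover have "impact_ratio M X Y \<delta> = integral\<^sup>L M (\<lambda>\<omega>. Y \<omega> * (c * \<delta> (X \<omega>)))"
    using impact_ratio_cmult[OF \<delta> c, of Y] \<open>SD M (\<lambda>\<omega>. c * \<delta> (X \<omega>)) = 1\<close>
    by (simp add: impact_ratio_def)
  ultimately show "\<exists>\<delta>'\<in>{\<delta> \<in> H0 M X. integral\<^sup>L M (\<lambda>\<omega>. (\<delta> (X \<omega>))\<^sup>2) = 1}.
      ereal (impact_ratio M X Y \<delta>) \<le> ereal (integral\<^sup>L M (\<lambda>\<omega>. Y \<omega> * \<delta>' (X \<omega>)))"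
    using c\<delta> by (intro bexI[of _ "\<lambda>x. c * \<delta> x"]) auto
qed

lemma impact_ratio_le_SUP_if_bounded_below:
  assumes "\<delta> \<in> H0 M X" "SD M (\<lambda>\<omega>. \<delta> (X \<omega>)) > 0" "K \<ge> 0" "\<And>x. \<delta> x \<ge> -K"
  shows "ereal (impact_ratio M X Y \<delta>) \<le>
           (SUP \<delta> \<in> {\<delta> \<in> H0 M X. SD M (\<lambda>\<omega>. \<delta> (X \<omega>)) > 0 \<and> (AE \<omega> in M. \<delta> (X \<omega>) \<ge> -1)}.
              ereal (impact_ratio M X Y \<delta>))"
proof (rule SUP_upper2)
  define c where "c = 1 / (K + 1)"
  have c: "c > 0" using assms(3) by (simp add: c_def)
  have "c * \<delta> x \<ge> c * - K" for x using assms(4) c by (intro mult_left_mono) auto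
  moreover have "c * - K \<ge> -1" using assms(3) by (simp add: c_def field_simps)
  ultimately have "c * \<delta> x \<ge> -1" for x by (meson order_trans)
  then show "(\<lambda>x. c * \<delta> x) \<in>
      {\<delta> \<in> H0 M X. SD M (\<lambda>\<omega>. \<delta> (X \<omega>)) > 0 \<and> (AE \<omega> in M. \<delta> (X \<omega>) \<ge> -1)}"
    using H0_cmult[OF assms(1)] SD_H0_cmult[OF assms(1), of c] assms(2) c by simp
  show "ereal (impact_ratio M X Y \<delta>) \<le> ereal (impact_ratio M X Y (\<lambda>x. c * \<delta> x))"
    using impact_ratio_cmult[OF assms(1) c] by simp
qed

lemma tendsto_integral_truncate_below:
  fixes g w :: "'a \<Rightarrow> real" and h :: "'a \<Rightarrow> real \<Rightarrow> real"
  assumes "(\<lambda>\<omega>. h \<omega> (g \<omega>)) \<in> borel_measurable M"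
    and "\<And>n. (\<lambda>\<omega>. h \<omega> (max (g \<omega>) (- real n))) \<in> borel_measurable M"
    and "integrable M w" and "\<And>\<omega> t. \<bar>t\<bar> \<le> \<bar>g \<omega>\<bar> \<Longrightarrow> \<bar>h \<omega> t\<bar> \<le> w \<omega>"
  shows "integrable M (\<lambda>\<omega>. h \<omega> (max (g \<omega>) (- real n)))"
    and "(\<lambda>n. integral\<^sup>L M (\<lambda>\<omega>. h \<omega> (max (g \<omega>) (- real n)))) \<longlonglongrightarrow> integral\<^sup>L M (\<lambda>\<omega>. h \<omega> (g \<omega>))"
proof -
  have "(\<lambda>n. h \<omega> (max (g \<omega>) (- real n))) \<longlonglongrightarrow> h \<omega> (g \<omega>)" for \<omega>
  proof (rule tendsto_eventually)
    have "max (g \<omega>) (- real n) = g \<omega>" if "n \<ge> nat \<lceil>- g \<omega>\<rceil>" for n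
      using that by linarith
    then show "\<forall>\<^sub>F n in sequentially. h \<omega> (max (g \<omega>) (- real n)) = h \<omega> (g \<omega>)"
      unfolding eventually_sequentially by (metis (no_types, lifting))
  qed
  moreover have "\<bar>h \<omega> (max (g \<omega>) (- real n))\<bar> \<le> w \<omega>" for n \<omega>
    by (rule assms(4)) linarith
  ultimately show "integrable M (\<lambda>\<omega>. h \<omega> (max (g \<omega>) (- real n)))"
    and "(\<lambda>n. integral\<^sup>L M (\<lambda>\<omega>. h \<omega> (max (g \<omega>) (- real n)))) \<longlonglongrightarrow> integral\<^sup>L M (\<lambda>\<omega>. h \<omega> (g \<omega>))"
    using assms(1-3)
    by (auto intro!: integrable_dominated_convergence2 integral_dominated_convergence[where w = w])
qed

lemma (in prob_space) SD_diff_const: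
  assumes "integrable M f"
  shows "SD M (\<lambda>\<omega>. f \<omega> - c) = SD M f"
  using assms by (simp add: SD_def prob_space)

lemma (in prob_space) H0_centered:
  assumes "X \<in> borel_measurable M" "g \<in> borel_measurable borel"
    and "integrable M (\<lambda>\<omega>. (g (X \<omega>))\<^sup>2)"
  shows "(\<lambda>x. g x - expectation (\<lambda>\<omega>. g (X \<omega>))) \<in> H0 M X"
proof -
  define m where "m = expectation (\<lambda>\<omega>. g (X \<omega>))"
  have gX: "(\<lambda>\<omega>. g (X \<omega>)) \<in> borel_measurable M" using assms(1,2) by measurable
  then have "integrable M (\<lambda>\<omega>. g (X \<omega>))"
    using assms(3) by (rule square_integrable_imp_integrable)
  moreover have "(\<lambda>\<omega>. (g (X \<omega>) - m)\<^sup>2) = (\<lambda>\<omega>. (g (X \<omega>))\<^sup>2 - 2 * m * g (X \<omega>) + m\<^sup>2)"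
    by (simp add: power2_diff algebra_simps)
  ultimately show ?thesis
    using assms(2,3) unfolding H0_def m_def[symmetric] by (auto simp: m_def prob_space)
qed

lemma (in prob_space) tendsto_covariance_and_SD:
  fixes Y :: "'a \<Rightarrow> real" and g :: "nat \<Rightarrow> 'a \<Rightarrow> real"
  assumes "integrable M Y" and "\<And>n. integrable M (g n)"
    and "\<And>n. integrable M (\<lambda>\<omega>. (g n \<omega>)\<^sup>2)" and "\<And>n. integrable M (\<lambda>\<omega>. Y \<omega> * g n \<omega>)"
    and "(\<lambda>n. expectation (g n)) \<longlonglongrightarrow> \<mu>"
    and "(\<lambda>n. expectation (\<lambda>\<omega>. (g n \<omega>)\<^sup>2)) \<longlonglongrightarrow> \<sigma>"
    and "(\<lambda>n. expectation (\<lambda>\<omega>. Y \<omega> * g n \<omega>)) \<longlonglongrightarrow> \<rho>"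
  shows "(\<lambda>n. expectation (\<lambda>\<omega>. Y \<omega> * (g n \<omega> - expectation (g n)))) \<longlonglongrightarrow> \<rho> - \<mu> * expectation Y"
    and "(\<lambda>n. SD M (g n)) \<longlonglongrightarrow> sqrt (\<sigma> - \<mu>\<^sup>2)"
proof -
  have "expectation (\<lambda>\<omega>. Y \<omega> * (g n \<omega> - expectation (g n)))
          = expectation (\<lambda>\<omega>. Y \<omega> * g n \<omega>) - expectation (g n) * expectation Y" for n
    using assms(1,4) by (simp add: right_diff_distrib mult.commute[of _ "expectation (g n)"])
  then show "(\<lambda>n. expectation (\<lambda>\<omega>. Y \<omega> * (g n \<omega> - expectation (g n)))) \<longlonglongrightarrow> \<rho> - \<mu> * expectation Y"
    using assms(5,7) by (auto intro!: tendsto_eq_intros)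
  have "SD M (g n) = sqrt (expectation (\<lambda>\<omega>. (g n \<omega>)\<^sup>2) - (expectation (g n))\<^sup>2)" for n
    unfolding SD_def using variance_eq[OF assms(2,3)] by simp
  then show "(\<lambda>n. SD M (g n)) \<longlonglongrightarrow> sqrt (\<sigma> - \<mu>\<^sup>2)"
    using assms(5,6) by (auto intro!: tendsto_eq_intros)
qed

definition centered_truncation :: "'a measure \<Rightarrow> ('a \<Rightarrow> real) \<Rightarrow> (real \<Rightarrow> real) \<Rightarrow> nat \<Rightarrow> real \<Rightarrow> real"
  where "centered_truncation M X \<delta> n x =
           max (\<delta> x) (- real n) - integral\<^sup>L M (\<lambda>\<omega>. max (\<delta> (X \<omega>)) (- real n))"

lemma centered_truncation_bounded_below:
  "centered_truncation M X \<delta> n x \<ge> - (real n + \<bar>integral\<^sup>L M (\<lambda>\<omega>. max (\<delta> (X \<omega>)) (- real n))\<bar>)"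
  unfolding centered_truncation_def by linarith

lemma (in prob_space) centered_truncation_in_H0:
  assumes "X \<in> borel_measurable M" "\<delta> \<in> H0 M X"
  shows "centered_truncation M X \<delta> n \<in> H0 M X"
proof -
  have \<delta>B: "\<delta> \<in> borel_measurable borel" and \<delta>2: "integrable M (\<lambda>\<omega>. (\<delta> (X \<omega>))\<^sup>2)"
    using assms(2) by (auto simp: H0_def)
  have "integrable M (\<lambda>\<omega>. (max (\<delta> (X \<omega>)) (- real n))\<^sup>2)"
    by (rule tendsto_integral_truncate_below(1)[where h = "\<lambda>_ t. t\<^sup>2" and w = "\<lambda>\<omega>. (\<delta> (X \<omega>))\<^sup>2"])
       (use assms(1) \<delta>B \<delta>2 in \<open>auto simp: abs_le_square_iff\<close>)
  then show ?thesis
    unfolding centered_truncation_def[abs_def] using \<delta>B by (intro H0_centered[OF assms(1)]) auto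
qed

lemma (in prob_space) tendsto_centered_truncation:
  assumes X: "X \<in> borel_measurable M"
    and Y: "Y \<in> borel_measurable M" "integrable M (\<lambda>\<omega>. (Y \<omega>)\<^sup>2)"
    and \<delta>: "\<delta> \<in> H0 M X" "SD M (\<lambda>\<omega>. \<delta> (X \<omega>)) > 0"
  shows "(\<lambda>n. impact_ratio M X Y (centered_truncation M X \<delta> n)) \<longlonglongrightarrow> impact_ratio M X Y \<delta>"
    and "(\<lambda>n. SD M (\<lambda>\<omega>. centered_truncation M X \<delta> n (X \<omega>))) \<longlonglongrightarrow> SD M (\<lambda>\<omega>. \<delta> (X \<omega>))"
proof -
  have \<delta>B: "\<delta> \<in> borel_measurable borel" and \<delta>2: "integrable M (\<lambda>\<omega>. (\<delta> (X \<omega>))\<^sup>2)"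
    and \<delta>0: "expectation (\<lambda>\<omega>. \<delta> (X \<omega>)) = 0"
    using \<delta>(1) by (auto simp: H0_def)
  have \<delta>X: "(\<lambda>\<omega>. \<delta> (X \<omega>)) \<in> borel_measurable M" using X \<delta>B by measurable
  have YI: "integrable M Y" using Y by (rule square_integrable_imp_integrable)
  have \<delta>I: "integrable M (\<lambda>\<omega>. \<delta> (X \<omega>))" using \<delta>X \<delta>2 by (rule square_integrable_imp_integrable)
  have Y\<delta>I: "integrable M (\<lambda>\<omega>. Y \<omega> * \<delta> (X \<omega>))"
    using Y(1) \<delta>X Y(2) \<delta>2 by (rule integrable_mult_if_square_integrable)
  define g where "g n = (\<lambda>\<omega>. max (\<delta> (X \<omega>)) (- real n))" for n
  have E: "integrable M (g n)" "(\<lambda>n. expectation (g n)) \<longlonglongrightarrow> 0" for n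
    unfolding g_def \<delta>0[symmetric]
    by (rule tendsto_integral_truncate_below[where h = "\<lambda>_ t. t" and w = "\<lambda>\<omega>. \<bar>\<delta> (X \<omega>)\<bar>"];
        use \<delta>X \<delta>I in auto)+
  have E2: "integrable M (\<lambda>\<omega>. (g n \<omega>)\<^sup>2)"
    "(\<lambda>n. expectation (\<lambda>\<omega>. (g n \<omega>)\<^sup>2)) \<longlonglongrightarrow> expectation (\<lambda>\<omega>. (\<delta> (X \<omega>))\<^sup>2)" for n
    unfolding g_def
    by (rule tendsto_integral_truncate_below[where h = "\<lambda>_ t. t\<^sup>2" and w = "\<lambda>\<omega>. (\<delta> (X \<omega>))\<^sup>2"];
        use \<delta>X \<delta>2 in \<open>auto simp: abs_le_square_iff\<close>)+
  have EY: "integrable M (\<lambda>\<omega>. Y \<omega> * g n \<omega>)"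
    "(\<lambda>n. expectation (\<lambda>\<omega>. Y \<omega> * g n \<omega>)) \<longlonglongrightarrow> expectation (\<lambda>\<omega>. Y \<omega> * \<delta> (X \<omega>))" for n
    unfolding g_def
    by (rule tendsto_integral_truncate_below[where h = "\<lambda>\<omega> t. Y \<omega> * t" and w = "\<lambda>\<omega>. \<bar>Y \<omega> * \<delta> (X \<omega>)\<bar>"];
        use Y(1) \<delta>X integrable_abs[OF Y\<delta>I] in \<open>auto simp: abs_mult intro: mult_left_mono\<close>)+
  have lim_cov: "(\<lambda>n. expectation (\<lambda>\<omega>. Y \<omega> * (g n \<omega> - expectation (g n))))
                   \<longlonglongrightarrow> expectation (\<lambda>\<omega>. Y \<omega> * \<delta> (X \<omega>))"
    and lim_SD: "(\<lambda>n. SD M (g n)) \<longlonglongrightarrow> SD M (\<lambda>\<omega>. \<delta> (X \<omega>))"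
    using tendsto_covariance_and_SD[OF YI E(1) E2(1) EY(1) E(2) E2(2) EY(2)] SD_H0_eq[OF \<delta>(1)]
    by simp_all
  have dX: "centered_truncation M X \<delta> n (X \<omega>) = g n \<omega> - expectation (g n)" for n \<omega>
    by (simp add: centered_truncation_def g_def)
  have SD_d: "SD M (\<lambda>\<omega>. centered_truncation M X \<delta> n (X \<omega>)) = SD M (g n)" for n
    using SD_diff_const[OF E(1)] by (simp add: dX)
  show "(\<lambda>n. SD M (\<lambda>\<omega>. centered_truncation M X \<delta> n (X \<omega>))) \<longlonglongrightarrow> SD M (\<lambda>\<omega>. \<delta> (X \<omega>))"
    unfolding SD_d by (rule lim_SD)
  show "(\<lambda>n. impact_ratio M X Y (centered_truncation M X \<delta> n)) \<longlonglongrightarrow> impact_ratio M X Y \<delta>"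
    unfolding impact_ratio_def SD_d unfolding dX
    using lim_cov lim_SD \<delta>(2) by (intro tendsto_divide) auto
qed

lemma (in prob_space) impact_ratio_le_SUP_bounded_below:
  assumes "X \<in> borel_measurable M"
    and "Y \<in> borel_measurable M" "integrable M (\<lambda>\<omega>. (Y \<omega>)\<^sup>2)"
    and "\<delta> \<in> H0 M X" "SD M (\<lambda>\<omega>. \<delta> (X \<omega>)) > 0"
  shows "ereal (impact_ratio M X Y \<delta>) \<le>
           (SUP \<delta> \<in> {\<delta> \<in> H0 M X. SD M (\<lambda>\<omega>. \<delta> (X \<omega>)) > 0 \<and> (AE \<omega> in M. \<delta> (X \<omega>) \<ge> -1)}.
              ereal (impact_ratio M X Y \<delta>))"
    (is "_ \<le> ?S")
proof (rule tendsto_le[OF trivial_limit_sequentially tendsto_const])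
  note lim = tendsto_centered_truncation[OF assms]
  show "(\<lambda>n. ereal (impact_ratio M X Y (centered_truncation M X \<delta> n)))
          \<longlonglongrightarrow> ereal (impact_ratio M X Y \<delta>)"
    using lim(1) by (rule tendsto_ereal)
  show "\<forall>\<^sub>F n in sequentially. ereal (impact_ratio M X Y (centered_truncation M X \<delta> n)) \<le> ?S"
    using order_tendstoD(1)[OF lim(2) assms(5)]
  proof (rule eventually_mono)
    fix n assume "SD M (\<lambda>\<omega>. centered_truncation M X \<delta> n (X \<omega>)) > 0"
    then show "ereal (impact_ratio M X Y (centered_truncation M X \<delta> n)) \<le> ?S"
      by (rule impact_ratio_le_SUP_if_bounded_below[OF centered_truncation_in_H0[OF assms(1,4)] _ _
            centered_truncation_bounded_below]) simp
  qed
qed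

theorem mainTheorem5:
  fixes M :: "'a measure" and X Y :: "'a \<Rightarrow> real"
  assumes "prob_space M"
    and "X \<in> borel_measurable M" and "Y \<in> borel_measurable M"
    and "integrable M (\<lambda>\<omega>. (X \<omega>)\<^sup>2)" and "integrable M (\<lambda>\<omega>. (Y \<omega>)\<^sup>2)"
  shows "mean_impact M X Y =
           (SUP \<delta> \<in> {\<delta> \<in> H0 M X. SD M (\<lambda>\<omega>. \<delta> (X \<omega>)) > 0}.
              ereal (integral\<^sup>L M (\<lambda>\<omega>. Y \<omega> * \<delta> (X \<omega>)) / SD M (\<lambda>\<omega>. \<delta> (X \<omega>))))
       \<and> mean_impact M X Y =
           (SUP \<delta> \<in> {\<delta> \<in> H0 M X. SD M (\<lambda>\<omega>. \<delta> (X \<omega>)) > 0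
                          \<and> (AE \<omega> in M. \<delta> (X \<omega>) \<ge> -1)}.
              ereal (integral\<^sup>L M (\<lambda>\<omega>. Y \<omega> * \<delta> (X \<omega>)) / SD M (\<lambda>\<omega>. \<delta> (X \<omega>))))"
proof -
  interpret prob_space M by fact
  let ?B = "{\<delta> \<in> H0 M X. SD M (\<lambda>\<omega>. \<delta> (X \<omega>)) > 0}"
  let ?C = "{\<delta> \<in> H0 M X. SD M (\<lambda>\<omega>. \<delta> (X \<omega>)) > 0 \<and> (AE \<omega> in M. \<delta> (X \<omega>) \<ge> -1)}"
  have "(SUP \<delta> \<in> ?B. ereal (impact_ratio M X Y \<delta>)) \<le> (SUP \<delta> \<in> ?C. ereal (impact_ratio M X Y \<delta>))"
    using impact_ratio_le_SUP_bounded_below[OF assms(2,3,5)] by (auto intro: SUP_least)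
  moreover have "(SUP \<delta> \<in> ?C. ereal (impact_ratio M X Y \<delta>)) \<le> (SUP \<delta> \<in> ?B. ereal (impact_ratio M X Y \<delta>))"
    by (rule SUP_subset_mono) auto
  ultimately show ?thesis
    using mean_impact_eq_SUP_impact_ratio[of M X Y] unfolding impact_ratio_def by simp
qed

end
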